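(* Let $E>0$, $\theta=2/E$. For $n,m\in\mathbb{N}_0$ and each sign $\pm$, the tempered distributions $f^\pm_{n,m}\in\mathcal{S}'(\mathbb{R}^2)$ defined in the context satisfy, in the sense of distributions, $$\mathsf{D}^2 f^\pm_{n,m}=\pm\,\mathcal{E}_n\,f^\pm_{n,m},\qquad \tilde{\mathsf{D}}^2 f^\pm_{n,m}=\pm\,\mathcal{E}_m\,f^\pm_{n,m},\qquad \mathcal{E}_n=2iE\big(n+\tfrac12\big).$$
   Context: Coordinates $\mathbf{x}=(t,x)\in\mathbb{R}^2$. $\mathsf{D}^2=\frac12\big[-(\partial_t^2-\partial_x^2)-2iE(x\partial_t+t\partial_x)-E^2(t^2-x^2)\big]$ and $\tilde{\mathsf{D}}^2=\frac12\big[-(\partial_t^2-\partial_x^2)+2iE(x\partial_t+t\partial_x)-E^2(t^2-x^2)\big]$. Let $E'=E/2$, let $H_n$ be the Hermite polynomials, $N_n=\big(\sqrt{E'}/(2^n n!\sqrt\pi)\big)^{1/2}$, $N_n^\pm=(\pm i)^{1/4}N_n$ (principal branches), and $$f_n^\pm(q)=N_n^\pm\,e^{\mp i(E'/2)q^2}H_n\big(\sqrt{\pm iE'}\,q\big),\qquad q\in\mathbb{R}.$$ (These are the complex-scaled harmonic oscillator eigenfunctions, generalized eigenfunctions of the inverted oscillator with imaginary eigenvalues.) Define $$f^\pm_{n,m}(t,x)=\frac1{2\pi}\int_{\mathbb{R}}dk\;e^{ikx}\,f_n^\pm\big(t-\theta k/2\big)\,\overline{f_m^\mp\big(t+\theta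 k/2\big)},$$ understood as an oscillatory integral defining an element of $\mathcal{S}'(\mathbb{R}^2)$; this is the Wigner distribution of the operator $|f_n^\pm\rangle\langle f_m^\mp|$. *)

theory Defs
  imports "HOL-Analysis.Analysis"
begin

type_synonym fn2 = "real \<Rightarrow> real \<Rightarrow> complex"

fun hermite :: "nat \<Rightarrow> complex \<Rightarrow> complex" where
  "hermite 0 z = 1"
| "hermite (Suc 0) z = 2 * z"
| "hermite (Suc (Suc n)) z = 2 * z * hermite (Suc n) z - 2 * of_nat (Suc n) * hermite n z"

definition normN :: "real \<Rightarrow> nat \<Rightarrow> real" where
  "normN E' n = sqrt (sqrt E' / (2 ^ n * fact n * sqrt pi))"

(* f_n^sigma(q), sigma = 1 for "+", sigma = -1 for "-"; principal branches via powr / csqrt *)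
definition fpm :: "real \<Rightarrow> real \<Rightarrow> nat \<Rightarrow> real \<Rightarrow> complex" where
  "fpm E' \<sigma> n q =
     ((of_real \<sigma> * \<i>) powr (1/4)) * of_real (normN E' n)
     * exp (- of_real \<sigma> * \<i> * of_real (E' / 2) * of_real (q^2))
     * hermite n (csqrt (of_real \<sigma> * \<i> * of_real E') * of_real q)"

definition wigF :: "real \<Rightarrow> real \<Rightarrow> real \<Rightarrow> nat \<Rightarrow> nat \<Rightarrow> real \<Rightarrow> real \<Rightarrow> complex" where
  "wigF E \<theta> \<sigma> n m t k =
     fpm (E/2) \<sigma> n (t - \<theta> * k / 2) * cnj (fpm (E/2) (- \<sigma>) m (t + \<theta> * k / 2))"

(* The distribution f^sigma_{n,m} acting on a test function phi:
   <f, phi> = (1/2pi) \<integral>\<integral> dt dk F(t,k) \<integral> dx e^{ikx} phi(t,x)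
   (standard meaning of the oscillatory integral, x-integration done first) *)
definition wig_pair :: "real \<Rightarrow> real \<Rightarrow> real \<Rightarrow> nat \<Rightarrow> nat \<Rightarrow> fn2 \<Rightarrow> complex" where
  "wig_pair E \<theta> \<sigma> n m \<phi> =
     (1 / (2 * of_real pi)) *
     (LINT p|lborel. wigF E \<theta> \<sigma> n m (fst p) (snd p)
        * (LINT x|lborel. exp (\<i> * of_real (snd p * x)) * \<phi> (fst p) x))"

definition dT :: "fn2 \<Rightarrow> fn2" where
  "dT u = (\<lambda>t x. vector_derivative (\<lambda>s. u s x) (at t))"
definition dX :: "fn2 \<Rightarrow> fn2" where
  "dX u = (\<lambda>t x. vector_derivative (\<lambda>y. u t y) (at x))"

fun pderivs :: "bool list \<Rightarrow> fn2 \<Rightarrow> fn2" where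
  "pderivs [] u = u"
| "pderivs (b # bs) u = (if b then dT else dX) (pderivs bs u)"

(* complex-valued C^infinity test functions with compact support on R^2 *)
definition test_fun :: "fn2 \<Rightarrow> bool" where
  "test_fun \<phi> \<longleftrightarrow>
     (\<exists>R. \<forall>t x. R < \<bar>t\<bar> \<or> R < \<bar>x\<bar> \<longrightarrow> \<phi> t x = 0) \<and>
     (\<forall>bs. continuous_on UNIV (\<lambda>p. pderivs bs \<phi> (fst p) (snd p)) \<and>
            (\<forall>t x. (\<lambda>s. pderivs bs \<phi> s x) differentiable (at t) \<and>
                   (\<lambda>y. pderivs bs \<phi> t y) differentiable (at x)))"

definition Dsq :: "real \<Rightarrow> fn2 \<Rightarrow> fn2" where
  "Dsq E u = (\<lambda>t x. (1/2) * ( - (dT (dT u) t x - dX (dX u) t x)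
       - 2 * \<i> * of_real E * (of_real x * dT u t x + of_real t * dX u t x)
       - of_real (E^2 * (t^2 - x^2)) * u t x))"

definition Dtsq :: "real \<Rightarrow> fn2 \<Rightarrow> fn2" where
  "Dtsq E u = (\<lambda>t x. (1/2) * ( - (dT (dT u) t x - dX (dX u) t x)
       + 2 * \<i> * of_real E * (of_real x * dT u t x + of_real t * dX u t x)
       - of_real (E^2 * (t^2 - x^2)) * u t x))"

(* formal transposes: (a \<partial>^alpha)^T phi = (-1)^|alpha| \<partial>^alpha (a phi) *)
definition Dsq_T :: "real \<Rightarrow> fn2 \<Rightarrow> fn2" where
  "Dsq_T E \<phi> = (\<lambda>t x. (1/2) * ( - (dT (dT \<phi>) t x - dX (dX \<phi>) t x)
       + 2 * \<i> * of_real E * (dT (\<lambda>t' x'. of_real x' * \<phi> t' x') t x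
                               + dX (\<lambda>t' x'. of_real t' * \<phi> t' x') t x)
       - of_real (E^2 * (t^2 - x^2)) * \<phi> t x))"

definition Dtsq_T :: "real \<Rightarrow> fn2 \<Rightarrow> fn2" where
  "Dtsq_T E \<phi> = (\<lambda>t x. (1/2) * ( - (dT (dT \<phi>) t x - dX (dX \<phi>) t x)
       - 2 * \<i> * of_real E * (dT (\<lambda>t' x'. of_real x' * \<phi> t' x') t x
                               + dX (\<lambda>t' x'. of_real t' * \<phi> t' x') t x)
       - of_real (E^2 * (t^2 - x^2)) * \<phi> t x))"

definition calE :: "real \<Rightarrow> nat \<Rightarrow> complex" where
  "calE E n = 2 * \<i> * of_real E * (of_nat n + 1/2)"

end

theory Submission
  imports Defs "HOL-Probability.Sinc_Integral" "HOL-Real_Asymp.Real_Asymp"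
begin

text \<open>
  Paired with a test function \<phi>, the distribution is the integral over (t,k) of
  F(t,k) = g(t - k/E) h(t + k/E) against \<psi>(t,k), the Fourier transform of \<phi>(t,-) in x;
  \<psi> decays rapidly in k, so this is an absolutely convergent integral. Under this transform
  the transposed operator becomes a second-order operator in (t,k) acting on \<psi>: d/dx turns
  into multiplication by k and multiplication by x into d/dk. Integrating by parts in t and k
  moves it onto F. The factors g, h are complex-scaled Hermite functions and solve Weber's
  equation y'' = (\<beta> - E^2 q^2/4) y; since \<theta> = 2/E, the operator applied to F collapses,
  by Weber's equation for g (resp. h), to multiplication by -2\<beta> (resp. -2\<gamma>).
\<close>


section \<open>Test functions\<close>

definition vanishes_outside :: "real \<Rightarrow> fn2 \<Rightarrow> bool" where
  "vanishes_outside R h \<longleftrightarrow> (\<forall>t x. R < \<bar>t\<bar> \<or> R < \<bar>x\<bar> \<longrightarrow> h t x = 0)"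

definition smooth2 :: "fn2 \<Rightarrow> bool" where
  "smooth2 h \<longleftrightarrow> (\<forall>bs. continuous_on UNIV (\<lambda>p. pderivs bs h (fst p) (snd p)) \<and>
     (\<forall>t x. (\<lambda>s. pderivs bs h s x) differentiable (at t) \<and>
            (\<lambda>y. pderivs bs h t y) differentiable (at x)))"

lemma test_fun_iff: "test_fun h \<longleftrightarrow> (\<exists>R. vanishes_outside R h) \<and> smooth2 h"
  by (simp add: test_fun_def vanishes_outside_def smooth2_def)

lemma vanishes_outside_mono: "vanishes_outside R h \<Longrightarrow> R \<le> R' \<Longrightarrow> vanishes_outside R' h"
  unfolding vanishes_outside_def by force

lemma test_fun_vanishes_outside_pos: "test_fun h \<Longrightarrow> \<exists>R>0. vanishes_outside R h"
  unfolding test_fun_iff by (meson gt_ex le_less_linear less_trans vanishes_outside_mono)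

lemma pderivs_append: "pderivs (bs @ cs) h = pderivs bs (pderivs cs h)"
  by (induction bs) auto

lemma smooth2_pderivs: "smooth2 h \<Longrightarrow> smooth2 (pderivs cs h)"
  unfolding smooth2_def by (metis pderivs_append)

lemma smooth2_has_vector_derivative:
  assumes "smooth2 h"
  shows "((\<lambda>s. pderivs bs h s x) has_vector_derivative pderivs (True # bs) h t x) (at t)"
    and "((\<lambda>y. pderivs bs h t y) has_vector_derivative pderivs (False # bs) h t x) (at x)"
  using assms unfolding smooth2_def by (auto simp: dT_def dX_def vector_derivative_works[symmetric])

lemma vector_derivative_locally_zero:
  fixes f :: "real \<Rightarrow> complex"
  assumes "open S" "x \<in> S" "\<And>y. y \<in> S \<Longrightarrow> f y = 0"
  shows "vector_derivative f (at x) = 0"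
proof -
  have "(f has_vector_derivative 0) (at x)"
    by (rule has_vector_derivative_transform_within_open[of "\<lambda>y. 0" 0 x S]) (use assms in auto)
  then show ?thesis by (rule vector_derivative_at)
qed

lemma vanishes_outside_dT: "vanishes_outside R h \<Longrightarrow> vanishes_outside R (dT h)"
  unfolding vanishes_outside_def dT_def
proof (intro allI impI)
  fix t x
  assume h: "\<forall>t x. R < \<bar>t\<bar> \<or> R < \<bar>x\<bar> \<longrightarrow> h t x = 0" and tx: "R < \<bar>t\<bar> \<or> R < \<bar>x\<bar>"
  show "vector_derivative (\<lambda>s. h s x) (at t) = 0"
  proof (cases "R < \<bar>x\<bar>")
    case False
    then show ?thesis using tx
      by (intro vector_derivative_locally_zero[of "{s. R < \<bar>s\<bar>}"])
         (use h in \<open>auto intro!: open_Collect_less continuous_intros\<close>)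
  qed (use h in simp)
qed

lemma vanishes_outside_dX: "vanishes_outside R h \<Longrightarrow> vanishes_outside R (dX h)"
  unfolding vanishes_outside_def dX_def
proof (intro allI impI)
  fix t x
  assume h: "\<forall>t x. R < \<bar>t\<bar> \<or> R < \<bar>x\<bar> \<longrightarrow> h t x = 0" and tx: "R < \<bar>t\<bar> \<or> R < \<bar>x\<bar>"
  show "vector_derivative (\<lambda>y. h t y) (at x) = 0"
  proof (cases "R < \<bar>t\<bar>")
    case False
    then show ?thesis using tx
      by (intro vector_derivative_locally_zero[of "{s. R < \<bar>s\<bar>}"])
         (use h in \<open>auto intro!: open_Collect_less continuous_intros\<close>)
  qed (use h in simp)
qed

lemma vanishes_outside_pderivs: "vanishes_outside R h \<Longrightarrow> vanishes_outside R (pderivs bs h)"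
  by (induction bs) (auto intro: vanishes_outside_dT vanishes_outside_dX)

lemma test_fun_pderivs: "test_fun h \<Longrightarrow> test_fun (pderivs bs h)"
  unfolding test_fun_iff using vanishes_outside_pderivs smooth2_pderivs by blast

lemma test_fun_dT: "test_fun h \<Longrightarrow> test_fun (dT h)"
  using test_fun_pderivs[of h "[True]"] by simp

lemma test_fun_dX: "test_fun h \<Longrightarrow> test_fun (dX h)"
  using test_fun_pderivs[of h "[False]"] by simp

definition remove_nth :: "nat \<Rightarrow> 'a list \<Rightarrow> 'a list" where
  "remove_nth j xs = take j xs @ drop (Suc j) xs"

lemma remove_nth_Cons_0 [simp]: "remove_nth 0 (x # xs) = xs"
  by (simp add: remove_nth_def)

lemma remove_nth_Cons_Suc [simp]: "remove_nth (Suc j) (x # xs) = x # remove_nth j xs"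
  by (simp add: remove_nth_def)

definition mult_by_x :: "complex \<Rightarrow> fn2 \<Rightarrow> fn2" where
  "mult_by_x c h = (\<lambda>t x. c * of_real x * h t x)"

text \<open>Leibniz rule: each d/dx in the word bs may fall on the factor x instead of on h.\<close>
lemma pderivs_mult_by_x:
  assumes h: "smooth2 h"
  shows "pderivs bs (mult_by_x c h) = (\<lambda>t x. c * of_real x * pderivs bs h t x
            + c * (\<Sum>j<length bs. (if bs ! j then 0 else 1) * pderivs (remove_nth j bs) h t x))"
proof (induction bs)
  case Nil then show ?case by (simp add: mult_by_x_def)
next
  case (Cons b bs)
  let ?S = "\<lambda>t x. c * of_real x * pderivs bs h t x
            + c * (\<Sum>j<length bs. (if bs ! j then 0 else 1) * pderivs (remove_nth j bs) h t x)"
  note D = smooth2_has_vector_derivative[OF h] smooth2_has_vector_derivative[OF smooth2_pderivs[OF h]]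
  have dt: "((\<lambda>s. ?S s x) has_vector_derivative
      (c * of_real x * pderivs (True # bs) h t x
       + c * (\<Sum>j<length bs. (if bs ! j then 0 else 1) * pderivs (True # remove_nth j bs) h t x))) (at t)"
    for t x
    by (rule derivative_eq_intros D refl | simp)+
  have dx: "((\<lambda>y. ?S t y) has_vector_derivative
      (c * pderivs bs h t x + c * of_real x * pderivs (False # bs) h t x
       + c * (\<Sum>j<length bs. (if bs ! j then 0 else 1) * pderivs (False # remove_nth j bs) h t x))) (at x)"
    for t x
    by (rule derivative_eq_intros D refl | simp add: algebra_simps)+
  show ?case
  proof (cases b)
    case True
    then show ?thesis
      using Cons by (auto simp: fun_eq_iff dT_def vector_derivative_at[OF dt] sum.lessThan_Suc_shift
          simp del: sum.lessThan_Suc)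
  next
    case False
    have "pderivs (False # bs) (mult_by_x c h) t x = c * pderivs bs h t x
       + c * of_real x * pderivs (False # bs) h t x
       + c * (\<Sum>j<length bs. (if bs ! j then 0 else 1) * pderivs (False # remove_nth j bs) h t x)"
      for t x
      using Cons vector_derivative_at[OF dx] by (simp add: dX_def)
    then show ?thesis
      using False by (auto simp: fun_eq_iff sum.lessThan_Suc_shift algebra_simps
          simp del: sum.lessThan_Suc)
  qed
qed

lemma smooth2_mult_by_x:
  assumes h: "smooth2 h"
  shows "smooth2 (mult_by_x c h)"
  unfolding smooth2_def pderivs_mult_by_x[OF h]
proof (intro allI conjI)
  fix bs t x
  have c: "continuous_on UNIV (\<lambda>p. pderivs cs h (fst p) (snd p))"
    and d: "(\<lambda>s. pderivs cs h s x) differentiable (at t)" "(\<lambda>y. pderivs cs h t y) differentiable (at x)"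
    for cs
    using h smooth2_def by blast+
  show "continuous_on UNIV (\<lambda>p. c * complex_of_real (snd p) * pderivs bs h (fst p) (snd p) +
          c * (\<Sum>j<length bs. (if bs ! j then 0 else 1) * pderivs (remove_nth j bs) h (fst p) (snd p)))"
    by (intro continuous_intros c)
  show "(\<lambda>s. c * complex_of_real x * pderivs bs h s x +
          c * (\<Sum>j<length bs. (if bs ! j then 0 else 1) * pderivs (remove_nth j bs) h s x)) differentiable at t"
    by (auto intro!: derivative_intros d)
  show "(\<lambda>y. c * complex_of_real y * pderivs bs h t y +
          c * (\<Sum>j<length bs. (if bs ! j then 0 else 1) * pderivs (remove_nth j bs) h t y)) differentiable at x"
    by (auto intro!: derivative_intros d)
qed

lemma test_fun_mult_by_x: "test_fun h \<Longrightarrow> test_fun (mult_by_x c h)"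
  unfolding test_fun_iff using smooth2_mult_by_x
  by (metis vanishes_outside_def mult_by_x_def mult_zero_right)

lemma test_fun_continuous: "test_fun h \<Longrightarrow> continuous_on UNIV (\<lambda>p. h (fst p) (snd p))"
  unfolding test_fun_iff smooth2_def using pderivs.simps(1) by metis

lemma continuous_on_curry_fst:
  "continuous_on UNIV (\<lambda>p. h (fst p) (snd p)) \<Longrightarrow> continuous_on UNIV (\<lambda>t. h t x)"
  by (rule continuous_on_compose2[where f="\<lambda>t. (t, x)" and g="\<lambda>p. h (fst p) (snd p)", simplified])
     (auto intro!: continuous_intros)

lemma continuous_on_curry_snd:
  "continuous_on UNIV (\<lambda>p. h (fst p) (snd p)) \<Longrightarrow> continuous_on UNIV (\<lambda>x. h t x)"
  by (rule continuous_on_compose2[where f="\<lambda>x. (t, x)" and g="\<lambda>p. h (fst p) (snd p)", simplified])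
     (auto intro!: continuous_intros)

lemma integrable_lborel_if_vanishes_outside:
  fixes f :: "real \<Rightarrow> complex"
  assumes "continuous_on UNIV f" "\<And>x. R < \<bar>x\<bar> \<Longrightarrow> f x = 0"
  shows "integrable lborel f"
proof -
  have "integrable lborel (\<lambda>x. indicator {-R..R} x *\<^sub>R f x)"
    by (rule borel_integrable_compact) (auto intro: continuous_on_subset[OF assms(1)])
  moreover have "(\<lambda>x. indicator {-R..R} x *\<^sub>R f x) = f"
    using assms(2) by (auto simp: fun_eq_iff indicator_def abs_le_iff not_le)
  ultimately show ?thesis by simp
qed

lemma tendsto_zero_if_vanishes_outside:
  fixes f :: "real \<Rightarrow> complex"
  assumes "\<And>x. R < \<bar>x\<bar> \<Longrightarrow> f x = 0"
  shows "(f \<longlongrightarrow> 0) at_top" and "(f \<longlongrightarrow> 0) at_bot"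
  using assms
  by (auto intro!: tendsto_eventually exI[of _ "\<bar>R\<bar> + 1"] simp: eventually_at_top_linorder,
      auto intro!: tendsto_eventually exI[of _ "- \<bar>R\<bar> - 1"] simp: eventually_at_bot_linorder)

lemma test_fun_bounded:
  assumes "test_fun h"
  shows "\<exists>M. \<forall>t x. norm (h t x) \<le> M"
proof -
  obtain R where R: "vanishes_outside R h" using assms test_fun_iff by blast
  have "compact ((\<lambda>p. h (fst p) (snd p)) ` cbox (-R, -R) (R, R))"
    by (rule compact_continuous_image)
       (auto intro: continuous_on_subset[OF test_fun_continuous[OF assms]])
  then obtain M where M: "\<And>y. y \<in> (\<lambda>p. h (fst p) (snd p)) ` cbox (-R, -R) (R, R) \<Longrightarrow> norm y \<le> M"
    using compact_imp_bounded bounded_iff by metis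
  have "norm (h t x) \<le> max M 0" for t x
  proof (cases "R < \<bar>t\<bar> \<or> R < \<bar>x\<bar>")
    case True then show ?thesis using R unfolding vanishes_outside_def by auto
  next
    case False
    then have "(t, x) \<in> cbox (-R, -R) (R, R)" by (auto simp: cbox_Pair_iff abs_le_iff)
    then show ?thesis using M[of "h t x"] by force
  qed
  then show ?thesis by blast
qed

section \<open>The Fourier transform in the space variable\<close>

lemma lborel_integral_by_parts:
  fixes u v u' v' :: "real \<Rightarrow> complex"
  assumes du: "\<And>x. (u has_vector_derivative u' x) (at x)"
    and dv: "\<And>x. (v has_vector_derivative v' x) (at x)"
    and cu: "continuous_on UNIV u'" and cv: "continuous_on UNIV v'"
    and i1: "integrable lborel (\<lambda>x. u x * v' x)"
    and i2: "integrable lborel (\<lambda>x. u' x * v x)"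
    and lt: "((\<lambda>x. u x * v x) \<longlongrightarrow> 0) at_top"
    and lb: "((\<lambda>x. u x * v x) \<longlongrightarrow> 0) at_bot"
  shows "(LINT x|lborel. u x * v' x) = - (LINT x|lborel. u' x * v x)"
proof -
  have D: "((\<lambda>x. u x * v x) has_vector_derivative (u x * v' x + u' x * v x)) (at x)" for x
    using has_vector_derivative_mult[OF du dv] by (simp add: algebra_simps)
  have "isCont u x" "isCont v x" for x
    using du dv has_vector_derivative_continuous by blast+
  then have cf: "isCont (\<lambda>x. u x * v' x + u' x * v x) x" for x
    using cu cv by (auto intro!: continuous_intros simp: continuous_on_eq_continuous_at)
  have "(LBINT x=-\<infinity>..\<infinity>. u x * v' x + u' x * v x) = 0 - 0"
    by (rule interval_integral_FTC_integrable[where F="\<lambda>x. u x * v x"])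
       (use D cf i1 i2 lt lb in \<open>auto simp: ereal_tendsto_simps set_integrable_def\<close>)
  then have "(LINT x|lborel. u x * v' x + u' x * v x) = 0"
    by (simp add: interval_lebesgue_integral_def set_lebesgue_integral_def)
  then show ?thesis using i1 i2 by (simp add: eq_neg_iff_add_eq_0)
qed

lemma has_vector_derivative_exp_ikx:
  "((\<lambda>x. exp (\<i> * of_real (k * x))) has_vector_derivative \<i> * of_real k * exp (\<i> * of_real (k * x)))
     (at x within S)"
proof -
  have "((\<lambda>z. exp (\<i> * (of_real k * z))) has_field_derivative
          \<i> * of_real k * exp (\<i> * (of_real k * of_real x))) (at (of_real x))"
    by (rule derivative_eq_intros refl | simp)+
  from has_vector_derivative_real_field[OF this] show ?thesis by simp
qed

lemma has_vector_derivative_exp_ikx_k: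
  "((\<lambda>k. exp (\<i> * of_real (k * x))) has_vector_derivative \<i> * of_real x * exp (\<i> * of_real (k * x)))
     (at k within S)"
  using has_vector_derivative_exp_ikx[of x k S] by (simp add: mult.commute)

definition fourier_x :: "fn2 \<Rightarrow> real \<Rightarrow> real \<Rightarrow> complex" where
  "fourier_x h t k = (LINT x|lborel. exp (\<i> * of_real (k * x)) * h t x)"

lemma fourier_x_vanishes:
  "vanishes_outside R h \<Longrightarrow> R < \<bar>t\<bar> \<Longrightarrow> fourier_x h t k = 0"
  by (simp add: fourier_x_def vanishes_outside_def)

lemma integrable_fourier_x_integrand:
  assumes "test_fun h"
  shows "integrable lborel (\<lambda>x. exp (\<i> * of_real (k * x)) * h t x)"
proof -
  obtain R where R: "vanishes_outside R h" using assms test_fun_iff by blast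
  show ?thesis
    by (rule integrable_lborel_if_vanishes_outside[where R=R])
       (use R continuous_on_curry_snd[OF test_fun_continuous[OF assms]]
         in \<open>auto intro!: continuous_intros simp: vanishes_outside_def\<close>)
qed

lemma has_bochner_integral_fourier_x:
  "test_fun h \<Longrightarrow> has_bochner_integral lborel (\<lambda>x. exp (\<i> * of_real (k * x)) * h t x) (fourier_x h t k)"
  unfolding fourier_x_def using integrable_fourier_x_integrand has_bochner_integral_integrable by blast

lemma fourier_x_eq_integral_cbox:
  assumes h: "test_fun h" and R: "vanishes_outside R h"
  shows "fourier_x h t k = integral (cbox (-R) R) (\<lambda>x. exp (\<i> * of_real (k * x)) * h t x)"
proof -
  have "fourier_x h t k = integral UNIV (\<lambda>x. exp (\<i> * of_real (k * x)) * h t x)"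
    unfolding fourier_x_def by (rule integral_lborel[symmetric, OF integrable_fourier_x_integrand[OF h]])
  also have "(\<lambda>x. exp (\<i> * of_real (k * x)) * h t x)
      = (\<lambda>x. if x \<in> cbox (-R) R then exp (\<i> * of_real (k * x)) * h t x else 0)"
    using R by (auto simp: fun_eq_iff vanishes_outside_def abs_le_iff not_le)
  also have "integral UNIV \<dots> = integral (cbox (-R) R) (\<lambda>x. exp (\<i> * of_real (k * x)) * h t x)"
    by (rule integral_restrict_UNIV)
  finally show ?thesis .
qed

lemma fourier_x_bounded:
  assumes h: "test_fun h"
  shows "\<exists>B. \<forall>t k. norm (fourier_x h t k) \<le> B"
proof -
  obtain R where R: "vanishes_outside R h" using h test_fun_iff by blast
  obtain M where M: "\<And>t x. norm (h t x) \<le> M" using test_fun_bounded[OF h] by blast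
  have ii: "integrable lborel (\<lambda>x. indicator {-R..R} x * M :: real)"
    using borel_integrable_compact[of "{-R..R}" "\<lambda>x. M"] by simp
  have "norm (fourier_x h t k) \<le> (LINT x|lborel. indicator {-R..R} x * M)" for t k
  proof -
    have "norm (fourier_x h t k) \<le> (LINT x|lborel. norm (exp (\<i> * of_real (k * x)) * h t x))"
      unfolding fourier_x_def by (rule integral_norm_bound)
    also have "\<dots> \<le> (LINT x|lborel. indicator {-R..R} x * M)"
    proof (rule integral_mono[OF integrable_norm[OF integrable_fourier_x_integrand[OF h]] ii])
      fix x
      show "norm (exp (\<i> * of_real (k * x)) * h t x) \<le> indicator {-R..R} x * M"
        using R M[of t x] unfolding vanishes_outside_def norm_mult
        by (cases "R < \<bar>x\<bar>") (auto simp: indicator_def abs_le_iff norm_exp_i_times[of "k * x", simplified])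
    qed
    finally show ?thesis .
  qed
  then show ?thesis by blast
qed

lemma fourier_x_dX:
  assumes h: "test_fun h"
  shows "fourier_x (dX h) t k = - \<i> * of_real k * fourier_x h t k"
proof -
  obtain R where R: "vanishes_outside R h" using assms test_fun_iff by blast
  have "(LINT x|lborel. exp (\<i> * of_real (k * x)) * dX h t x)
       = - (LINT x|lborel. (\<i> * of_real k * exp (\<i> * of_real (k * x))) * h t x)"
  proof (rule lborel_integral_by_parts)
    show "((\<lambda>y. h t y) has_vector_derivative dX h t x) (at x)" for x
      using smooth2_has_vector_derivative(2)[of h "[]" t x] h by (simp add: dX_def test_fun_iff)
    show "continuous_on UNIV (dX h t)"
      using continuous_on_curry_snd[OF test_fun_continuous[OF test_fun_dX[OF h]]] by simp
    show "integrable lborel (\<lambda>x. \<i> * of_real k * exp (\<i> * of_real (k * x)) * h t x)"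
      using integrable_mult_right[OF integrable_fourier_x_integrand[OF h], of "\<i> * of_real k"]
      by (simp add: mult.assoc)
    show "((\<lambda>x. exp (\<i> * of_real (k * x)) * h t x) \<longlongrightarrow> 0) at_top"
      and "((\<lambda>x. exp (\<i> * of_real (k * x)) * h t x) \<longlongrightarrow> 0) at_bot"
      using tendsto_zero_if_vanishes_outside[of R "\<lambda>x. exp (\<i> * of_real (k * x)) * h t x"] R
      by (simp_all add: vanishes_outside_def)
    show "((\<lambda>x. exp (\<i> * of_real (k * x))) has_vector_derivative
            \<i> * of_real k * exp (\<i> * of_real (k * x))) (at x)" for x
      by (rule has_vector_derivative_exp_ikx)
    show "integrable lborel (\<lambda>x. exp (\<i> * of_real (k * x)) * dX h t x)"
      using integrable_fourier_x_integrand[OF test_fun_dX[OF h]] .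
  qed (intro continuous_intros)
  then show ?thesis unfolding fourier_x_def by (simp add: mult.assoc)
qed

lemma fourier_x_dX_power:
  "test_fun h \<Longrightarrow> fourier_x (pderivs (replicate j False) h) t k = (- \<i> * of_real k) ^ j * fourier_x h t k"
proof (induction j)
  case (Suc j)
  then show ?case
    using fourier_x_dX[OF test_fun_pderivs[OF Suc.prems], of "replicate j False" t k] by simp
qed simp

lemma one_plus_power_le: "(0::real) \<le> a \<Longrightarrow> (1 + a) ^ N \<le> 2 ^ N * (1 + a ^ N)"
proof -
  assume a: "0 \<le> a"
  have "(1 + a) ^ N \<le> (2 * max 1 a) ^ N" using a by (intro power_mono) auto
  also have "\<dots> = 2 ^ N * max 1 a ^ N" by (simp add: power_mult_distrib)
  also have "max 1 a ^ N \<le> 1 + a ^ N" using a by (cases "a \<le> 1") (auto simp: max_def)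
  then have "2 ^ N * max 1 a ^ N \<le> 2 ^ N * (1 + a ^ N)" by simp
  finally show ?thesis .
qed

text \<open>Rapid decay in k: integrating by parts N times in x trades (1 + |k|)^N for N x-derivatives.\<close>
lemma fourier_x_rapid_decay:
  assumes h: "test_fun h"
  shows "\<exists>B. \<forall>t k. norm (fourier_x h t k) * (1 + \<bar>k\<bar>) ^ N \<le> B"
proof -
  obtain B0 where B0: "\<And>t k. norm (fourier_x h t k) \<le> B0"
    using fourier_x_bounded[OF h] by blast
  obtain BN where BN: "\<And>t k. norm (fourier_x (pderivs (replicate N False) h) t k) \<le> BN"
    using fourier_x_bounded[OF test_fun_pderivs[OF h]] by blast
  have "norm (fourier_x h t k) * (1 + \<bar>k\<bar>) ^ N \<le> 2 ^ N * (B0 + BN)" for t k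
  proof -
    have "norm (fourier_x h t k) * (1 + \<bar>k\<bar>) ^ N \<le> norm (fourier_x h t k) * (2 ^ N * (1 + \<bar>k\<bar> ^ N))"
      by (intro mult_left_mono one_plus_power_le) auto
    also have "\<dots> = 2 ^ N * (norm (fourier_x h t k) + norm (fourier_x (pderivs (replicate N False) h) t k))"
      by (simp add: fourier_x_dX_power[OF h] norm_mult norm_power algebra_simps)
    also have "\<dots> \<le> 2 ^ N * (B0 + BN)"
      by (intro mult_left_mono add_mono B0 BN) auto
    finally show ?thesis .
  qed
  then show ?thesis by blast
qed

lemma fourier_x_measurable:
  assumes h: "test_fun h"
  shows "(\<lambda>p. fourier_x h (fst p) (snd p)) \<in> borel_measurable borel"
proof -
  have c: "continuous_on UNIV (\<lambda>q. h (fst q) (snd q))" by (rule test_fun_continuous[OF h])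
  have "(\<lambda>(p, x). exp (\<i> * of_real (snd p * x)) * h (fst p) x) \<in> borel_measurable (borel \<Otimes>\<^sub>M borel)"
    unfolding borel_prod case_prod_beta
    by (rule borel_measurable_continuous_onI, intro continuous_intros)
       (rule continuous_on_compose2[OF c, where f="\<lambda>q. (fst (fst q), snd q)", simplified],
        intro continuous_intros)
  then have "(\<lambda>(p, x). exp (\<i> * of_real (snd p * x)) * h (fst p) x) \<in> borel_measurable (borel \<Otimes>\<^sub>M lborel)"
    using measurable_cong_sets[OF sets_pair_measure_cong[OF refl sets_lborel] refl] by blast
  from lborel.borel_measurable_lebesgue_integral[OF this] show ?thesis
    unfolding fourier_x_def by simp
qed

lemma has_vector_derivative_fourier_x_k:
  assumes h: "test_fun h"
  shows "((\<lambda>k. fourier_x h t k) has_vector_derivative fourier_x (mult_by_x \<i> h) t k) (at k)"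
proof -
  obtain R where R: "vanishes_outside R h" using assms test_fun_iff by blast
  then have R': "vanishes_outside R (mult_by_x \<i> h)"
    by (simp add: vanishes_outside_def mult_by_x_def)
  have cx: "continuous_on UNIV (\<lambda>x. h t x)"
    using continuous_on_curry_snd[OF test_fun_continuous[OF h]] .
  have "((\<lambda>k. integral (cbox (-R) R) (\<lambda>x. exp (\<i> * of_real (k * x)) * h t x)) has_vector_derivative
        integral (cbox (-R) R) (\<lambda>x. \<i> * of_real x * exp (\<i> * of_real (k * x)) * h t x)) (at k within UNIV)"
  proof (rule leibniz_rule_vector_derivative)
    fix k' x
    show "((\<lambda>k. exp (\<i> * of_real (k * x)) * h t x) has_vector_derivative
          \<i> * of_real x * exp (\<i> * of_real (k' * x)) * h t x) (at k' within UNIV)"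
      using has_vector_derivative_mult_left[OF has_vector_derivative_exp_ikx_k[of x k' UNIV], of "h t x"]
      by (simp add: ac_simps)
  next
    show "continuous_on (UNIV \<times> cbox (- R) R)
            (\<lambda>(k, x). \<i> * of_real x * exp (\<i> * of_real (k * x)) * h t x)"
      unfolding case_prod_beta
      by (rule continuous_on_subset[OF _ subset_UNIV], intro continuous_intros)
         (rule continuous_on_compose2[OF cx], auto intro!: continuous_intros)
  next
    fix k'
    show "(\<lambda>x. exp (\<i> * of_real (k' * x)) * h t x) integrable_on cbox (- R) R"
      by (rule integrable_continuous, rule continuous_on_subset[OF _ subset_UNIV])
         (intro continuous_intros cx)
  qed auto
  then show ?thesis
    unfolding fourier_x_eq_integral_cbox[OF h R, abs_def]
      fourier_x_eq_integral_cbox[OF test_fun_mult_by_x[OF h] R']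
    by (simp add: mult_by_x_def algebra_simps)
qed

lemma has_vector_derivative_fourier_x_t:
  assumes h: "test_fun h"
  shows "((\<lambda>t. fourier_x h t k) has_vector_derivative fourier_x (dT h) t k) (at t)"
proof -
  obtain R where R: "vanishes_outside R h" using assms test_fun_iff by blast
  have sm: "smooth2 h" using h test_fun_iff by blast
  have "((\<lambda>t. integral (cbox (-R) R) (\<lambda>x. exp (\<i> * of_real (k * x)) * h t x)) has_vector_derivative
        integral (cbox (-R) R) (\<lambda>x. exp (\<i> * of_real (k * x)) * dT h t x)) (at t within UNIV)"
  proof (rule leibniz_rule_vector_derivative)
    fix t' x
    show "((\<lambda>t. exp (\<i> * of_real (k * x)) * h t x) has_vector_derivative
          exp (\<i> * of_real (k * x)) * dT h t' x) (at t' within UNIV)"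
      using smooth2_has_vector_derivative(1)[OF sm, of "[]" x t']
      by (auto intro!: derivative_eq_intros simp: dT_def)
  next
    show "continuous_on (UNIV \<times> cbox (- R) R) (\<lambda>(t, x). exp (\<i> * of_real (k * x)) * dT h t x)"
      unfolding case_prod_beta
      by (rule continuous_on_subset[OF _ subset_UNIV],
          intro continuous_intros test_fun_continuous[OF test_fun_dT[OF h]])
  next
    fix t'
    show "(\<lambda>x. exp (\<i> * of_real (k * x)) * h t' x) integrable_on cbox (- R) R"
      by (rule integrable_continuous, rule continuous_on_subset[OF _ subset_UNIV])
         (intro continuous_intros continuous_on_curry_snd[OF test_fun_continuous[OF h]])
  qed auto
  then show ?thesis
    unfolding fourier_x_eq_integral_cbox[OF h R, abs_def]
      fourier_x_eq_integral_cbox[OF test_fun_dT[OF h] vanishes_outside_dT[OF R]]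
    by simp
qed

lemma continuous_on_fourier_x_t: "test_fun h \<Longrightarrow> continuous_on UNIV (\<lambda>t. fourier_x h t k)"
  by (rule continuous_on_vector_derivative)
     (use has_vector_derivative_fourier_x_t in \<open>auto intro: has_vector_derivative_at_within\<close>)

lemma continuous_on_fourier_x_k: "test_fun h \<Longrightarrow> continuous_on UNIV (\<lambda>k. fourier_x h t k)"
  by (rule continuous_on_vector_derivative)
     (use has_vector_derivative_fourier_x_k in \<open>auto intro: has_vector_derivative_at_within\<close>)

section \<open>Continuous functions of polynomial growth\<close>

definition poly_growth :: "('a::topological_space \<Rightarrow> real) \<Rightarrow> ('a \<Rightarrow> complex) \<Rightarrow> bool" where
  "poly_growth w f \<longleftrightarrow> continuous_on UNIV f \<and> (\<exists>C D. \<forall>x. norm (f x) \<le> C * w x ^ D)"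

lemma poly_growth_const: "poly_growth w (\<lambda>x. c)"
  unfolding poly_growth_def by (intro conjI exI[of _ "norm c"] exI[of _ "0::nat"] allI) auto

lemma poly_growth_cnj: "poly_growth w f \<Longrightarrow> poly_growth w (\<lambda>x. cnj (f x))"
  unfolding poly_growth_def by (auto intro!: continuous_intros)

lemma poly_growth_mult:
  assumes "poly_growth w f" "poly_growth w g"
  shows "poly_growth w (\<lambda>x. f x * g x)"
proof -
  obtain C1 D1 where 1: "\<And>x. norm (f x) \<le> C1 * w x ^ D1" using assms(1) poly_growth_def by blast
  obtain C2 D2 where 2: "\<And>x. norm (g x) \<le> C2 * w x ^ D2" using assms(2) poly_growth_def by blast
  have "norm (f x * g x) \<le> (C1 * C2) * w x ^ (D1 + D2)" for x
  proof -
    have "norm (f x * g x) \<le> (C1 * w x ^ D1) * (C2 * w x ^ D2)"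
      unfolding norm_mult by (intro mult_mono 1 2) (auto intro: order_trans[OF norm_ge_zero 1])
    then show ?thesis by (simp add: power_add mult_ac)
  qed
  moreover have "continuous_on UNIV (\<lambda>x. f x * g x)"
    using assms by (auto simp: poly_growth_def intro!: continuous_intros)
  ultimately show ?thesis unfolding poly_growth_def by blast
qed

lemma poly_growth_add:
  assumes w: "\<And>x. 1 \<le> w x" and "poly_growth w f" "poly_growth w g"
  shows "poly_growth w (\<lambda>x. f x + g x)"
proof -
  obtain C1 D1 where 1: "\<And>x. norm (f x) \<le> C1 * w x ^ D1" using assms(2) poly_growth_def by blast
  obtain C2 D2 where 2: "\<And>x. norm (g x) \<le> C2 * w x ^ D2" using assms(3) poly_growth_def by blast
  have raise: "norm (u x) \<le> \<bar>C\<bar> * w x ^ (D1 + D2)"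
    if "norm (u x) \<le> C * w x ^ D" "D \<le> D1 + D2" for u :: "'a \<Rightarrow> complex" and C D x
  proof -
    have "C * w x ^ D \<le> \<bar>C\<bar> * w x ^ D" using w[of x] by (intro mult_right_mono) auto
    also have "\<dots> \<le> \<bar>C\<bar> * w x ^ (D1 + D2)"
      using w[of x] that(2) by (intro mult_left_mono power_increasing) auto
    finally show ?thesis using that(1) by linarith
  qed
  have "norm (f x + g x) \<le> (\<bar>C1\<bar> + \<bar>C2\<bar>) * w x ^ (D1 + D2)" for x
    using norm_triangle_ineq[of "f x" "g x"] raise[of f, OF 1[of x] le_add1] raise[of g, OF 2[of x] le_add2]
    by (simp add: algebra_simps)
  moreover have "continuous_on UNIV (\<lambda>x. f x + g x)"
    using assms by (auto simp: poly_growth_def intro!: continuous_intros)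
  ultimately show ?thesis unfolding poly_growth_def by blast
qed

lemma poly_growth_diff:
  assumes "\<And>x. 1 \<le> w x" and "poly_growth w f" "poly_growth w g"
  shows "poly_growth w (\<lambda>x. f x - g x)"
  using poly_growth_add[OF assms(1,2) poly_growth_mult[OF poly_growth_const assms(3), of "-1"]] by simp

abbreviation poly_growth_real :: "(real \<Rightarrow> complex) \<Rightarrow> bool" where
  "poly_growth_real \<equiv> poly_growth (\<lambda>q. 1 + \<bar>q\<bar>)"

definition tempered :: "fn2 \<Rightarrow> bool" where
  "tempered A \<longleftrightarrow> poly_growth (\<lambda>p. (1 + \<bar>fst p\<bar>) * (1 + \<bar>snd p\<bar>)) (\<lambda>p. A (fst p) (snd p))"

lemma tempered_continuous: "tempered A \<Longrightarrow> continuous_on UNIV (\<lambda>p. A (fst p) (snd p))"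
  by (simp add: tempered_def poly_growth_def)

lemma tempered_bound:
  "tempered A \<Longrightarrow> \<exists>C D. \<forall>t k. norm (A t k) \<le> C * ((1 + \<bar>t\<bar>) * (1 + \<bar>k\<bar>)) ^ D"
  by (simp add: tempered_def poly_growth_def)

lemma tempered_const: "tempered (\<lambda>t k. c)"
  unfolding tempered_def by (rule poly_growth_const)

lemma tempered_mult: "tempered A \<Longrightarrow> tempered B \<Longrightarrow> tempered (\<lambda>t k. A t k * B t k)"
  unfolding tempered_def by (rule poly_growth_mult)

lemma tempered_add: "tempered A \<Longrightarrow> tempered B \<Longrightarrow> tempered (\<lambda>t k. A t k + B t k)"
  unfolding tempered_def
  by (rule poly_growth_add) (auto simp: algebra_simps intro: add_increasing)

lemma tempered_diff: "tempered A \<Longrightarrow> tempered B \<Longrightarrow> tempered (\<lambda>t k. A t k - B t k)"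
  unfolding tempered_def
  by (rule poly_growth_diff) (auto simp: algebra_simps intro: add_increasing)

lemma tempered_of_real_t: "tempered (\<lambda>t k. of_real t)"
  unfolding tempered_def poly_growth_def
  by (intro conjI exI[of _ 1] exI[of _ "1::nat"] allI continuous_intros) (auto simp: algebra_simps)

lemma tempered_of_real_k: "tempered (\<lambda>t k. of_real k)"
  unfolding tempered_def poly_growth_def
  by (intro conjI exI[of _ 1] exI[of _ "1::nat"] allI continuous_intros) (auto simp: algebra_simps)

lemma tempered_comp_add:
  assumes "poly_growth_real f"
  shows "tempered (\<lambda>t k. f (t + b * k))"
proof -
  obtain C D where C: "\<And>q. norm (f q) \<le> C * (1 + \<bar>q\<bar>) ^ D"
    using assms unfolding poly_growth_def by auto
  have "norm (f (t + b * k)) \<le> (\<bar>C\<bar> * (1 + \<bar>b\<bar>) ^ D) * ((1 + \<bar>t\<bar>) * (1 + \<bar>k\<bar>)) ^ D" for t k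
  proof -
    have "1 + \<bar>t + b * k\<bar> \<le> 1 + \<bar>t\<bar> + \<bar>b\<bar> * \<bar>k\<bar>"
      using abs_triangle_ineq[of t "b * k"] by (simp add: abs_mult)
    also have "\<dots> \<le> (1 + \<bar>b\<bar>) * ((1 + \<bar>t\<bar>) * (1 + \<bar>k\<bar>))"
      by (simp add: algebra_simps add_increasing)
    finally have "(1 + \<bar>t + b * k\<bar>) ^ D \<le> ((1 + \<bar>b\<bar>) * ((1 + \<bar>t\<bar>) * (1 + \<bar>k\<bar>))) ^ D"
      by (intro power_mono) auto
    then have "C * (1 + \<bar>t + b * k\<bar>) ^ D
        \<le> \<bar>C\<bar> * ((1 + \<bar>b\<bar>) * ((1 + \<bar>t\<bar>) * (1 + \<bar>k\<bar>))) ^ D"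
      by (meson abs_ge_self abs_ge_zero mult_mono order_trans zero_le_power add_nonneg_nonneg zero_le_one)
    then show ?thesis using C[of "t + b * k"] by (simp add: power_mult_distrib mult_ac)
  qed
  moreover have "continuous_on UNIV (\<lambda>p. f (fst p + b * snd p))"
    using assms unfolding poly_growth_def
    by (intro continuous_on_compose2[where f="\<lambda>p. fst p + b * snd p" and g=f])
       (auto intro!: continuous_intros)
  ultimately show ?thesis unfolding tempered_def poly_growth_def by auto
qed

lemma tempered_comp_diff: "poly_growth_real f \<Longrightarrow> tempered (\<lambda>t k. f (t - b * k))"
  using tempered_comp_add[of f "- b"] by simp

section \<open>Pairing a tempered function with the Fourier transform of a test function\<close>

definition fourier_pairing :: "fn2 \<Rightarrow> fn2 \<Rightarrow> complex" where
  "fourier_pairing A h = (LINT p|lborel. A (fst p) (snd p) * fourier_x h (fst p) (snd p))"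

lemma integrable_inverse_1_plus_square_lborel: "integrable lborel (\<lambda>k::real. inverse (1 + k\<^sup>2))"
  using integrable_inverse_1_plus_square by (simp add: set_integrable_def)

lemma norm_le_if_quadratic_decay:
  fixes f :: "real \<Rightarrow> complex"
  assumes "\<And>k. norm (f k) * (1 + \<bar>k\<bar>)\<^sup>2 \<le> K"
  shows "norm (f k) \<le> K * inverse (1 + k\<^sup>2)"
proof -
  have "norm (f k) * (1 + k\<^sup>2) \<le> norm (f k) * (1 + \<bar>k\<bar>)\<^sup>2"
    by (intro mult_left_mono) (auto simp: power2_eq_square algebra_simps)
  also have "\<dots> \<le> K" by (rule assms)
  finally show ?thesis by (simp add: field_simps add_pos_nonneg)
qed

lemma integrable_if_quadratic_decay:
  fixes f :: "real \<Rightarrow> complex"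
  assumes "continuous_on UNIV f" "\<And>k. norm (f k) * (1 + \<bar>k\<bar>)\<^sup>2 \<le> K"
  shows "integrable lborel f"
proof (rule Bochner_Integration.integrable_bound
         [OF integrable_mult_right[OF integrable_inverse_1_plus_square_lborel, of K]])
  show "f \<in> borel_measurable lborel" using assms(1) borel_measurable_continuous_onI by simp
  have "0 \<le> K" using assms(2)[of 0] by (smt (verit) norm_ge_zero mult_nonneg_nonneg zero_le_power2)
  then show "AE x in lborel. norm (f x) \<le> norm (K * inverse (1 + x\<^sup>2))"
    using norm_le_if_quadratic_decay[OF assms(2)] by (auto simp: abs_mult add_nonneg_nonneg)
qed

lemma tendsto_zero_if_quadratic_decay:
  fixes f :: "real \<Rightarrow> complex"
  assumes "\<And>k. norm (f k) * (1 + \<bar>k\<bar>)\<^sup>2 \<le> K"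
  shows "(f \<longlongrightarrow> 0) at_top" and "(f \<longlongrightarrow> 0) at_bot"
proof -
  have b: "eventually (\<lambda>k. norm (f k) \<le> K * inverse (1 + k\<^sup>2)) F" for F
    using norm_le_if_quadratic_decay[OF assms] by (intro always_eventually) auto
  have lim: "((\<lambda>k::real. K * inverse (1 + k\<^sup>2)) \<longlongrightarrow> 0) at_top"
    "((\<lambda>k::real. K * inverse (1 + k\<^sup>2)) \<longlongrightarrow> 0) at_bot"
    by real_asymp+
  show "(f \<longlongrightarrow> 0) at_top" by (rule Lim_null_comparison[OF b lim(1)])
  show "(f \<longlongrightarrow> 0) at_bot" by (rule Lim_null_comparison[OF b lim(2)])
qed

text \<open>Uniform in t: on the support of the test function the factor (1 + |t|)^D stays bounded.\<close>
lemma tempered_fourier_x_quadratic_decay: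
  assumes A: "tempered A" and h: "test_fun h"
  shows "\<exists>K. \<forall>t k. norm (A t k * fourier_x h t k) * (1 + \<bar>k\<bar>)\<^sup>2 \<le> K"
proof -
  obtain C D where CD: "\<And>t k. norm (A t k) \<le> C * ((1 + \<bar>t\<bar>) * (1 + \<bar>k\<bar>)) ^ D"
    using tempered_bound[OF A] by blast
  obtain R where R: "R > 0" "vanishes_outside R h" using test_fun_vanishes_outside_pos[OF h] by blast
  obtain B where B: "\<And>t k. norm (fourier_x h t k) * (1 + \<bar>k\<bar>) ^ (D + 2) \<le> B"
    using fourier_x_rapid_decay[OF h] by blast
  have "norm (A t k * fourier_x h t k) * (1 + \<bar>k\<bar>)\<^sup>2 \<le> \<bar>C\<bar> * (1 + R) ^ D * \<bar>B\<bar>" for t k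
  proof (cases "R < \<bar>t\<bar>")
    case True then show ?thesis using fourier_x_vanishes[OF R(2) True] R(1) by simp
  next
    case False
    have A_bound: "norm (A t k) \<le> \<bar>C\<bar> * ((1 + R) * (1 + \<bar>k\<bar>)) ^ D"
    proof -
      have "C * ((1 + \<bar>t\<bar>) * (1 + \<bar>k\<bar>)) ^ D \<le> \<bar>C\<bar> * ((1 + \<bar>t\<bar>) * (1 + \<bar>k\<bar>)) ^ D"
        by (intro mult_right_mono) auto
      also have "\<dots> \<le> \<bar>C\<bar> * ((1 + R) * (1 + \<bar>k\<bar>)) ^ D"
        using False by (intro mult_left_mono power_mono mult_right_mono) auto
      finally show ?thesis using CD[of t k] by linarith
    qed
    have "norm (A t k * fourier_x h t k) * (1 + \<bar>k\<bar>)\<^sup>2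
        \<le> (\<bar>C\<bar> * ((1 + R) * (1 + \<bar>k\<bar>)) ^ D) * (norm (fourier_x h t k) * (1 + \<bar>k\<bar>)\<^sup>2)"
      using mult_right_mono[OF A_bound, of "norm (fourier_x h t k) * (1 + \<bar>k\<bar>)\<^sup>2"]
      by (simp add: norm_mult mult.assoc)
    also have "\<dots> = \<bar>C\<bar> * (1 + R) ^ D * (norm (fourier_x h t k) * (1 + \<bar>k\<bar>) ^ (D + 2))"
      by (simp only: power_mult_distrib power_add mult_ac)
    also have "\<dots> \<le> \<bar>C\<bar> * (1 + R) ^ D * \<bar>B\<bar>"
      using B[of t k] R(1) by (intro mult_left_mono) auto
    finally show ?thesis .
  qed
  then show ?thesis by blast
qed

lemma integrable_fourier_pairing:
  assumes A: "tempered A" and h: "test_fun h"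
  shows "integrable (lborel \<Otimes>\<^sub>M lborel) (\<lambda>p. A (fst p) (snd p) * fourier_x h (fst p) (snd p))"
proof -
  obtain K where K: "\<And>t k. norm (A t k * fourier_x h t k) * (1 + \<bar>k\<bar>)\<^sup>2 \<le> K"
    using tempered_fourier_x_quadratic_decay[OF A h] by blast
  have K0: "0 \<le> K" using K[of 0 0] by (smt (verit) norm_ge_zero mult_nonneg_nonneg zero_le_power2)
  obtain R where R: "R > 0" "vanishes_outside R h" using test_fun_vanishes_outside_pos[OF h] by blast
  define W where "W = (\<lambda>p::real \<times> real. K * indicator {-R..R} (fst p) * inverse (1 + (snd p)\<^sup>2))"
  have iR: "integrable lborel (\<lambda>t::real. indicator {-R..R} t :: real)"
    by (rule integrable_real_indicator) (auto simp: emeasure_lborel_Icc_eq)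
  have W: "integrable (lborel \<Otimes>\<^sub>M lborel) W"
  proof (rule lborel_pair.Fubini_integrable)
    show "W \<in> borel_measurable (lborel \<Otimes>\<^sub>M lborel)" unfolding W_def by measurable
    have "(\<lambda>t. LINT k|lborel. norm (W (t, k)))
        = (\<lambda>t. (K * (LINT k|lborel. inverse (1 + k\<^sup>2))) * indicator {-R..R} t)"
      using K0 by (auto simp: W_def fun_eq_iff abs_mult indicator_def add_nonneg_nonneg)
    then show "integrable lborel (\<lambda>t. LINT k|lborel. norm (W (t, k)))"
      using integrable_mult_right[OF iR, of "K * (LINT k|lborel. inverse (1 + k\<^sup>2))"]
      by (simp add: mult.commute)
    show "AE t in lborel. integrable lborel (\<lambda>k. W (t, k))"
      unfolding W_def using integrable_mult_right[OF integrable_inverse_1_plus_square_lborel] by simp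
  qed
  show ?thesis
  proof (rule Bochner_Integration.integrable_bound[OF W])
    have "(\<lambda>p. A (fst p) (snd p)) \<in> borel_measurable borel"
      using tempered_continuous[OF A] borel_measurable_continuous_onI by blast
    with fourier_x_measurable[OF h]
    show "(\<lambda>p. A (fst p) (snd p) * fourier_x h (fst p) (snd p)) \<in> borel_measurable (lborel \<Otimes>\<^sub>M lborel)"
      by (simp add: lborel_prod)
    have "norm (A t k * fourier_x h t k) \<le> norm (W (t, k))" for t k
    proof (cases "R < \<bar>t\<bar>")
      case True then show ?thesis using fourier_x_vanishes[OF R(2) True] by simp
    next
      case False
      then have "norm (W (t, k)) = K * inverse (1 + k\<^sup>2)"
        using K0 by (simp add: W_def indicator_def abs_le_iff abs_mult add_nonneg_nonneg not_less)
      then show ?thesis using norm_le_if_quadratic_decay[of "\<lambda>k. A t k * fourier_x h t k", OF K] by simp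
    qed
    then show "AE p in lborel \<Otimes>\<^sub>M lborel.
        norm (A (fst p) (snd p) * fourier_x h (fst p) (snd p)) \<le> norm (W p)"
      by (simp add: split_paired_all)
  qed
qed

lemma fourier_pairing_iterated_t_k:
  assumes "tempered A" "test_fun h"
  shows "fourier_pairing A h = (LINT t|lborel. LINT k|lborel. A t k * fourier_x h t k)"
  unfolding fourier_pairing_def lborel_prod[symmetric]
  using lborel_pair.integral_fst'[OF integrable_fourier_pairing[OF assms]] by simp

lemma fourier_pairing_iterated_k_t:
  assumes "tempered A" "test_fun h"
  shows "fourier_pairing A h = (LINT k|lborel. LINT t|lborel. A t k * fourier_x h t k)"
  unfolding fourier_pairing_def lborel_prod[symmetric]
  using lborel_pair.integral_snd[of "\<lambda>t k. A t k * fourier_x h t k"] integrable_fourier_pairing[OF assms]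
  by (simp add: case_prod_beta')

lemma fourier_pairing_dT:
  assumes A: "tempered A" and At: "tempered At"
    and dA: "\<And>t k. ((\<lambda>t. A t k) has_vector_derivative At t k) (at t)"
    and h: "test_fun h"
  shows "fourier_pairing A (dT h) = - fourier_pairing At h"
proof -
  obtain R where R: "vanishes_outside R h" using h test_fun_iff by blast
  have h': "test_fun (dT h)" using test_fun_dT[OF h] .
  have "(LINT t|lborel. A t k * fourier_x (dT h) t k) = - (LINT t|lborel. At t k * fourier_x h t k)" for k
  proof (rule lborel_integral_by_parts)
    show "integrable lborel (\<lambda>t. A t k * fourier_x (dT h) t k)"
      by (rule integrable_lborel_if_vanishes_outside[where R=R])
         (auto intro!: continuous_intros continuous_on_curry_fst[OF tempered_continuous[OF A]]
           continuous_on_fourier_x_t[OF h'] simp: fourier_x_vanishes[OF vanishes_outside_dT[OF R]])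
    show "integrable lborel (\<lambda>t. At t k * fourier_x h t k)"
      by (rule integrable_lborel_if_vanishes_outside[where R=R])
         (auto intro!: continuous_intros continuous_on_curry_fst[OF tempered_continuous[OF At]]
           continuous_on_fourier_x_t[OF h] simp: fourier_x_vanishes[OF R])
    show "((\<lambda>t. A t k * fourier_x h t k) \<longlongrightarrow> 0) at_top"
      and "((\<lambda>t. A t k * fourier_x h t k) \<longlongrightarrow> 0) at_bot"
      by (rule tendsto_zero_if_vanishes_outside[where R=R], simp add: fourier_x_vanishes[OF R])+
  qed (auto intro: dA has_vector_derivative_fourier_x_t[OF h] continuous_on_fourier_x_t[OF h']
         continuous_on_curry_fst[OF tempered_continuous[OF At]])
  then show ?thesis
    unfolding fourier_pairing_iterated_k_t[OF A h'] fourier_pairing_iterated_k_t[OF At h] by simp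
qed

lemma fourier_pairing_mult_by_x:
  assumes A: "tempered A" and Ak: "tempered Ak"
    and dA: "\<And>t k. ((\<lambda>k. A t k) has_vector_derivative Ak t k) (at k)"
    and h: "test_fun h"
  shows "fourier_pairing A (mult_by_x \<i> h) = - fourier_pairing Ak h"
proof -
  have h': "test_fun (mult_by_x \<i> h)" using test_fun_mult_by_x[OF h] .
  obtain K1 where K1: "\<And>t k. norm (A t k * fourier_x (mult_by_x \<i> h) t k) * (1 + \<bar>k\<bar>)\<^sup>2 \<le> K1"
    using tempered_fourier_x_quadratic_decay[OF A h'] by blast
  obtain K2 where K2: "\<And>t k. norm (Ak t k * fourier_x h t k) * (1 + \<bar>k\<bar>)\<^sup>2 \<le> K2"
    using tempered_fourier_x_quadratic_decay[OF Ak h] by blast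
  obtain K3 where K3: "\<And>t k. norm (A t k * fourier_x h t k) * (1 + \<bar>k\<bar>)\<^sup>2 \<le> K3"
    using tempered_fourier_x_quadratic_decay[OF A h] by blast
  have "(LINT k|lborel. A t k * fourier_x (mult_by_x \<i> h) t k)
      = - (LINT k|lborel. Ak t k * fourier_x h t k)" for t
  proof (rule lborel_integral_by_parts)
    show "integrable lborel (\<lambda>k. A t k * fourier_x (mult_by_x \<i> h) t k)"
      by (rule integrable_if_quadratic_decay[OF _ K1])
         (auto intro!: continuous_intros continuous_on_curry_snd[OF tempered_continuous[OF A]]
           continuous_on_fourier_x_k[OF h'])
    show "integrable lborel (\<lambda>k. Ak t k * fourier_x h t k)"
      by (rule integrable_if_quadratic_decay[OF _ K2])
         (auto intro!: continuous_intros continuous_on_curry_snd[OF tempered_continuous[OF Ak]]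
           continuous_on_fourier_x_k[OF h])
  qed (auto intro: dA has_vector_derivative_fourier_x_k[OF h] continuous_on_fourier_x_k[OF h']
         continuous_on_curry_snd[OF tempered_continuous[OF Ak]] tendsto_zero_if_quadratic_decay[OF K3])
  then show ?thesis
    unfolding fourier_pairing_iterated_t_k[OF A h'] fourier_pairing_iterated_t_k[OF Ak h] by simp
qed

section \<open>The transposed operators in the Fourier picture\<close>

definition Dsq_transpose :: "complex \<Rightarrow> real \<Rightarrow> fn2 \<Rightarrow> fn2" where
  "Dsq_transpose s E \<phi> = (\<lambda>t x. (1/2) * ( - (dT (dT \<phi>) t x - dX (dX \<phi>) t x)
       + s * 2 * \<i> * of_real E * (dT (\<lambda>t' x'. of_real x' * \<phi> t' x') t x
                               + dX (\<lambda>t' x'. of_real t' * \<phi> t' x') t x)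
       - of_real (E\<^sup>2 * (t\<^sup>2 - x\<^sup>2)) * \<phi> t x))"

lemma Dsq_T_eq: "Dsq_T E \<phi> = Dsq_transpose 1 E \<phi>"
  by (simp add: Dsq_T_def Dsq_transpose_def)

lemma Dtsq_T_eq: "Dtsq_T E \<phi> = Dsq_transpose (-1) E \<phi>"
  by (simp add: Dtsq_T_def Dsq_transpose_def)

lemma Dsq_transpose_expand:
  assumes h: "test_fun \<phi>"
  shows "Dsq_transpose s E \<phi> t x = (1/2) * (- dT (dT \<phi>) t x + dX (dX \<phi>) t x
     + 2 * s * of_real E * mult_by_x \<i> (dT \<phi>) t x
     + 2 * \<i> * s * of_real E * of_real t * dX \<phi> t x - of_real (E\<^sup>2 * t\<^sup>2) * \<phi> t x
     - of_real (E\<^sup>2) * mult_by_x \<i> (mult_by_x \<i> \<phi>) t x)"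
proof -
  have sm: "smooth2 \<phi>" using h test_fun_iff by blast
  have d1: "dT (\<lambda>t' x'. of_real x' * \<phi> t' x') t x = of_real x * dT \<phi> t x"
    unfolding dT_def
    by (rule vector_derivative_at)
       (use smooth2_has_vector_derivative(1)[OF sm, of "[]" x t]
         in \<open>auto intro!: derivative_eq_intros simp: dT_def\<close>)
  have d2: "dX (\<lambda>t' x'. of_real t' * \<phi> t' x') t x = of_real t * dX \<phi> t x"
    unfolding dX_def
    by (rule vector_derivative_at)
       (use smooth2_has_vector_derivative(2)[OF sm, of "[]" t x]
         in \<open>auto intro!: derivative_eq_intros simp: dX_def\<close>)
  have e: "mult_by_x \<i> (dT \<phi>) t x = \<i> * of_real x * dT \<phi> t x"
    "mult_by_x \<i> (mult_by_x \<i> \<phi>) t x = - (of_real x * of_real x) * \<phi> t x"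
    unfolding mult_by_x_def by (simp_all add: mult_ac)
  show ?thesis
    unfolding Dsq_transpose_def d1 d2 e of_real_mult of_real_diff of_real_power by algebra
qed

lemma fourier_x_Dsq_transpose:
  assumes h: "test_fun \<phi>"
  shows "fourier_x (Dsq_transpose s E \<phi>) t k = (-1/2) * fourier_x (dT (dT \<phi>)) t k
     + (s * of_real E) * fourier_x (mult_by_x \<i> (dT \<phi>)) t k
     + (- of_real (E\<^sup>2) / 2) * fourier_x (mult_by_x \<i> (mult_by_x \<i> \<phi>)) t k
     + (1/2) * (- of_real (k\<^sup>2) + 2 * s * of_real E * of_real t * of_real k - of_real (E\<^sup>2 * t\<^sup>2))
       * fourier_x \<phi> t k"
proof -
  let ?e = "\<lambda>x. exp (\<i> * of_real (k * x))"
  have "has_bochner_integral lborel (\<lambda>x. ?e x * Dsq_transpose s E \<phi> t x)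
     ((-1/2) * fourier_x (dT (dT \<phi>)) t k + (1/2) * fourier_x (dX (dX \<phi>)) t k
       + (s * of_real E) * fourier_x (mult_by_x \<i> (dT \<phi>)) t k
       + (\<i> * s * of_real E * of_real t) * fourier_x (dX \<phi>) t k
       + (- of_real (E\<^sup>2 * t\<^sup>2) / 2) * fourier_x \<phi> t k
       + (- of_real (E\<^sup>2) / 2) * fourier_x (mult_by_x \<i> (mult_by_x \<i> \<phi>)) t k)"
  proof -
    have "(\<lambda>x. ?e x * Dsq_transpose s E \<phi> t x) = (\<lambda>x. (-1/2) * (?e x * dT (dT \<phi>) t x)
       + (1/2) * (?e x * dX (dX \<phi>) t x) + (s * of_real E) * (?e x * mult_by_x \<i> (dT \<phi>) t x)
       + (\<i> * s * of_real E * of_real t) * (?e x * dX \<phi> t x)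
       + (- of_real (E\<^sup>2 * t\<^sup>2) / 2) * (?e x * \<phi> t x)
       + (- of_real (E\<^sup>2) / 2) * (?e x * mult_by_x \<i> (mult_by_x \<i> \<phi>) t x))"
      unfolding Dsq_transpose_expand[OF h] by (rule ext) (simp add: algebra_simps)
    then show ?thesis
      by (simp only:)
         (intro has_bochner_integral_add has_bochner_integral_mult_right has_bochner_integral_fourier_x
           test_fun_dT test_fun_dX test_fun_mult_by_x h)
  qed
  moreover have "fourier_x (dX (dX \<phi>)) t k = - of_real (k\<^sup>2) * fourier_x \<phi> t k"
  proof -
    have "(- \<i> * of_real k) ^ 2 = - of_real (k\<^sup>2)" by (simp add: power_mult_distrib)
    then show ?thesis using fourier_x_dX_power[OF h, of 2 t k] by (simp add: numeral_2_eq_2)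
  qed
  ultimately show ?thesis
    unfolding fourier_x_def[of "Dsq_transpose s E \<phi>"] has_bochner_integral_iff fourier_x_dX[OF h]
    by (simp add: algebra_simps)
qed

lemma fourier_pairing_add4:
  assumes "tempered B1" "tempered B2" "tempered B3" "tempered B4"
    "test_fun h1" "test_fun h2" "test_fun h3" "test_fun h4"
    "\<And>t k. A t k * fourier_x h t k = B1 t k * fourier_x h1 t k + B2 t k * fourier_x h2 t k
                + B3 t k * fourier_x h3 t k + B4 t k * fourier_x h4 t k"
  shows "fourier_pairing A h = fourier_pairing B1 h1 + fourier_pairing B2 h2
    + fourier_pairing B3 h3 + fourier_pairing B4 h4"
  using integrable_fourier_pairing[OF assms(1,5)] integrable_fourier_pairing[OF assms(2,6)]
    integrable_fourier_pairing[OF assms(3,7)] integrable_fourier_pairing[OF assms(4,8)]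
  unfolding fourier_pairing_def assms(9) lborel_prod
  by (simp add: Bochner_Integration.integral_add)

lemma fourier_pairing_cmult: "fourier_pairing (\<lambda>t k. c * A t k) h = c * fourier_pairing A h"
  unfolding fourier_pairing_def by (simp add: mult.assoc)

text \<open>
  Hypothesis eigen applies to A the operator of fourier_x_Dsq_transpose with every derivative
  moved across by integration by parts; each term carries two derivatives, so no sign changes.\<close>
theorem fourier_pairing_Dsq_transpose_eigen:
  assumes A: "tempered A" "tempered At" "tempered Ak" "tempered Att" "tempered Akt" "tempered Akk"
    and dAt: "\<And>t k. ((\<lambda>t. A t k) has_vector_derivative At t k) (at t)"
    and dAtt: "\<And>t k. ((\<lambda>t. At t k) has_vector_derivative Att t k) (at t)"
    and dAk: "\<And>t k. ((\<lambda>k. A t k) has_vector_derivative Ak t k) (at k)"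
    and dAkt: "\<And>t k. ((\<lambda>t. Ak t k) has_vector_derivative Akt t k) (at t)"
    and dAkk: "\<And>t k. ((\<lambda>k. Ak t k) has_vector_derivative Akk t k) (at k)"
    and eigen: "\<And>t k. (-1/2) * Att t k + (s * of_real E) * Akt t k + (- of_real (E\<^sup>2) / 2) * Akk t k
       + (1/2) * (- of_real (k\<^sup>2) + 2 * s * of_real E * of_real t * of_real k - of_real (E\<^sup>2 * t\<^sup>2)) * A t k
       = \<mu> * A t k"
    and \<phi>: "test_fun \<phi>"
  shows "fourier_pairing A (Dsq_transpose s E \<phi>) = \<mu> * fourier_pairing A \<phi>"
proof -
  define Q where "Q t k = (1/2) * (- of_real (k\<^sup>2) + 2 * s * of_real E * of_real t * of_real k
      - of_real (E\<^sup>2 * t\<^sup>2)) * A t k" for t k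
  have "Q = (\<lambda>t k. (1/2) * (2 * s * of_real E * of_real t * of_real k - of_real k * of_real k
      - of_real E * of_real E * (of_real t * of_real t)) * A t k)"
    by (simp add: Q_def power2_eq_square fun_eq_iff algebra_simps)
  then have Q: "tempered Q"
    by (simp only:) (intro tempered_mult tempered_add tempered_diff tempered_const
        tempered_of_real_t tempered_of_real_k A)
  have "fourier_pairing A (Dsq_transpose s E \<phi>)
      = fourier_pairing (\<lambda>t k. (-1/2) * A t k) (dT (dT \<phi>))
      + fourier_pairing (\<lambda>t k. (s * of_real E) * A t k) (mult_by_x \<i> (dT \<phi>))
      + fourier_pairing (\<lambda>t k. (- of_real (E\<^sup>2) / 2) * A t k) (mult_by_x \<i> (mult_by_x \<i> \<phi>))
      + fourier_pairing Q \<phi>"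
    by (rule fourier_pairing_add4;
        (intro tempered_mult tempered_const A Q test_fun_dT test_fun_mult_by_x \<phi>)?)
       (simp add: fourier_x_Dsq_transpose[OF \<phi>] Q_def algebra_simps)
  also have "\<dots> = fourier_pairing (\<lambda>t k. (-1/2) * Att t k) \<phi>
      + fourier_pairing (\<lambda>t k. (s * of_real E) * Akt t k) \<phi>
      + fourier_pairing (\<lambda>t k. (- of_real (E\<^sup>2) / 2) * Akk t k) \<phi>
      + fourier_pairing Q \<phi>"
    using fourier_pairing_dT[OF A(1,2) dAt test_fun_dT[OF \<phi>]] fourier_pairing_dT[OF A(2,4) dAtt \<phi>]
      fourier_pairing_mult_by_x[OF A(1,3) dAk test_fun_dT[OF \<phi>]] fourier_pairing_dT[OF A(3,5) dAkt \<phi>]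
      fourier_pairing_mult_by_x[OF A(1,3) dAk test_fun_mult_by_x[OF \<phi>]]
      fourier_pairing_mult_by_x[OF A(3,6) dAkk \<phi>]
    by (simp only: fourier_pairing_cmult) simp
  also have "\<dots> = fourier_pairing (\<lambda>t k. \<mu> * A t k) \<phi>"
    by (rule fourier_pairing_add4[symmetric]; (intro tempered_mult tempered_const A Q \<phi>)?)
       (simp add: eigen[symmetric] Q_def algebra_simps)
  finally show ?thesis by (simp add: fourier_pairing_cmult)
qed

section \<open>Products of solutions of Weber's equation\<close>

definition tempered_weber_solution :: "real \<Rightarrow> complex \<Rightarrow> (real \<Rightarrow> complex) \<Rightarrow> bool" where
  "tempered_weber_solution E \<beta> g \<longleftrightarrow> (\<exists>g' g''.
     poly_growth_real g \<and> poly_growth_real g' \<and> poly_growth_real g'' \<and>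
     (\<forall>q. (g has_vector_derivative g' q) (at q)) \<and> (\<forall>q. (g' has_vector_derivative g'' q) (at q)) \<and>
     (\<forall>q. g'' q = (\<beta> - (of_real E)\<^sup>2 / 4 * (of_real q)\<^sup>2) * g q))"

lemma tempered_weber_solution_cnj:
  assumes "tempered_weber_solution E \<beta> g"
  shows "tempered_weber_solution E (cnj \<beta>) (\<lambda>q. cnj (g q))"
proof -
  obtain g' g'' where g: "poly_growth_real g" "poly_growth_real g'" "poly_growth_real g''"
    "\<And>q. (g has_vector_derivative g' q) (at q)" "\<And>q. (g' has_vector_derivative g'' q) (at q)"
    "\<And>q. g'' q = (\<beta> - (of_real E)\<^sup>2 / 4 * (of_real q)\<^sup>2) * g q"
    using assms unfolding tempered_weber_solution_def by blast
  show ?thesis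
    unfolding tempered_weber_solution_def
    by (intro exI[of _ "\<lambda>q. cnj (g' q)"] exI[of _ "\<lambda>q. cnj (g'' q)"] conjI allI
        poly_growth_cnj has_vector_derivative_cnj g) (simp add: g(6))
qed

lemma has_vector_derivative_comp_real:
  assumes f: "\<And>q. (f has_vector_derivative f' q) (at q)"
    and p: "(p has_real_derivative p') (at x)" and D: "D = of_real p' * f' (p x)"
  shows "((\<lambda>x. f (p x)) has_vector_derivative D) (at x)"
  using vector_diff_chain_at[OF p[unfolded has_real_derivative_iff_has_vector_derivative] f] D
  by (simp add: o_def scaleR_conv_of_real)

lemma weber_product_identity:
  fixes G G' G'' H H' H'' t k E c \<beta> \<gamma> s \<mu> :: complex
  assumes c: "E * c = 1"
    and G'': "G'' = (\<beta> - E\<^sup>2 / 4 * (t - c * k)\<^sup>2) * G"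
    and H'': "H'' = (\<gamma> - E\<^sup>2 / 4 * (t + c * k)\<^sup>2) * H"
    and s: "s = 1 \<and> \<mu> = -2 * \<beta> \<or> s = -1 \<and> \<mu> = -2 * \<gamma>"
  shows "(-1/2) * (G'' * H + 2 * (G' * H') + G * H'') + (s * E) * (c * (G * H'' - G'' * H))
     + (- E\<^sup>2 / 2) * (c\<^sup>2 * (G'' * H - 2 * (G' * H') + G * H''))
     + (1/2) * (- k\<^sup>2 + 2 * s * E * t * k - E\<^sup>2 * t\<^sup>2) * (G * H) = \<mu> * (G * H)"
proof -
  have E: "E \<noteq> 0" using c by auto
  with c have c': "c = 1 / E" by (simp add: eq_divide_eq mult.commute)
  from s E show ?thesis
    unfolding G'' H'' c' by (auto simp: field_simps power2_eq_square)
qed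

text \<open>
  The weight c = 1/E (that is, \<theta>/2) is what makes the terms in g' h' cancel and the terms
  in t^2, tk and k^2 recombine into Weber's equation for g or for h.\<close>
theorem fourier_pairing_weber_product_eigen:
  assumes c: "E * c = 1"
    and g: "tempered_weber_solution E \<beta> g" and h: "tempered_weber_solution E \<gamma> h"
    and \<phi>: "test_fun \<phi>"
  defines "F \<equiv> \<lambda>t k. g (t - c * k) * h (t + c * k)"
  shows "fourier_pairing F (Dsq_transpose 1 E \<phi>) = -2 * \<beta> * fourier_pairing F \<phi>"
    and "fourier_pairing F (Dsq_transpose (-1) E \<phi>) = -2 * \<gamma> * fourier_pairing F \<phi>"
proof -
  obtain g1 g2 where G: "poly_growth_real g" "poly_growth_real g1" "poly_growth_real g2"
    and dg: "\<And>q. (g has_vector_derivative g1 q) (at q)"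
    and dg1: "\<And>q. (g1 has_vector_derivative g2 q) (at q)"
    and g2: "\<And>q. g2 q = (\<beta> - (of_real E)\<^sup>2 / 4 * (of_real q)\<^sup>2) * g q"
    using g unfolding tempered_weber_solution_def by blast
  obtain h1 h2 where H: "poly_growth_real h" "poly_growth_real h1" "poly_growth_real h2"
    and dh: "\<And>q. (h has_vector_derivative h1 q) (at q)"
    and dh1: "\<And>q. (h1 has_vector_derivative h2 q) (at q)"
    and h2: "\<And>q. h2 q = (\<gamma> - (of_real E)\<^sup>2 / 4 * (of_real q)\<^sup>2) * h q"
    using h unfolding tempered_weber_solution_def by blast
  define Ft where "Ft t k = g1 (t - c * k) * h (t + c * k) + g (t - c * k) * h1 (t + c * k)" for t k
  define Fk where "Fk t k = of_real c * (g (t - c * k) * h1 (t + c * k) - g1 (t - c * k) * h (t + c * k))"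
    for t k
  define Ftt where "Ftt t k = g2 (t - c * k) * h (t + c * k) + 2 * (g1 (t - c * k) * h1 (t + c * k))
      + g (t - c * k) * h2 (t + c * k)" for t k
  define Fkt where "Fkt t k = of_real c * (g (t - c * k) * h2 (t + c * k) - g2 (t - c * k) * h (t + c * k))"
    for t k
  define Fkk where "Fkk t k = (of_real c)\<^sup>2 * (g2 (t - c * k) * h (t + c * k)
      - 2 * (g1 (t - c * k) * h1 (t + c * k)) + g (t - c * k) * h2 (t + c * k))" for t k
  have T: "tempered F" "tempered Ft" "tempered Fk" "tempered Ftt" "tempered Fkt" "tempered Fkk"
    unfolding F_def Ft_def[abs_def] Fk_def[abs_def] Ftt_def[abs_def] Fkt_def[abs_def] Fkk_def[abs_def]
    by (intro tempered_add tempered_diff tempered_mult tempered_const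
        tempered_comp_add tempered_comp_diff G H)+
  note chain = has_vector_derivative_comp_real[OF dg] has_vector_derivative_comp_real[OF dh]
    has_vector_derivative_comp_real[OF dg1] has_vector_derivative_comp_real[OF dh1]
  have "((\<lambda>t. F t k) has_vector_derivative Ft t k) (at t)"
    "((\<lambda>t. Ft t k) has_vector_derivative Ftt t k) (at t)"
    "((\<lambda>k. F t k) has_vector_derivative Fk t k) (at k)"
    "((\<lambda>t. Fk t k) has_vector_derivative Fkt t k) (at t)"
    "((\<lambda>k. Fk t k) has_vector_derivative Fkk t k) (at k)" for t k
    unfolding F_def Ft_def Fk_def Ftt_def Fkt_def Fkk_def
    by (rule chain derivative_eq_intros refl | simp add: algebra_simps power2_eq_square)+
  note D = this
  have eigen: "(-1/2) * Ftt t k + (s * of_real E) * Fkt t k + (- of_real (E\<^sup>2) / 2) * Fkk t k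
      + (1/2) * (- of_real (k\<^sup>2) + 2 * s * of_real E * of_real t * of_real k - of_real (E\<^sup>2 * t\<^sup>2)) * F t k
      = \<mu> * F t k"
    if "s = 1 \<and> \<mu> = -2 * \<beta> \<or> s = -1 \<and> \<mu> = -2 * \<gamma>" for s \<mu> t k
  proof -
    have Ec: "of_real E * of_real c = (1::complex)" using c by (metis of_real_1 of_real_mult)
    have gh: "g2 (t - c * k) = (\<beta> - (of_real E)\<^sup>2 / 4 * (of_real t - of_real c * of_real k)\<^sup>2)
        * g (t - c * k)"
      "h2 (t + c * k) = (\<gamma> - (of_real E)\<^sup>2 / 4 * (of_real t + of_real c * of_real k)\<^sup>2)
        * h (t + c * k)"
      by (simp_all add: g2 h2)
    note weber_product_identity[where G="g (t - c * k)" and G'="g1 (t - c * k)"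
        and G''="g2 (t - c * k)" and H="h (t + c * k)" and H'="h1 (t + c * k)"
        and H''="h2 (t + c * k)" and t="of_real t" and k="of_real k", OF Ec gh that]
    then show ?thesis
      unfolding F_def Ft_def Fk_def Ftt_def Fkt_def Fkk_def by simp
  qed
  show "fourier_pairing F (Dsq_transpose 1 E \<phi>) = -2 * \<beta> * fourier_pairing F \<phi>"
    and "fourier_pairing F (Dsq_transpose (-1) E \<phi>) = -2 * \<gamma> * fourier_pairing F \<phi>"
    by (rule fourier_pairing_Dsq_transpose_eigen[OF T D eigen \<phi>], simp)+
qed

section \<open>Complex-scaled Hermite functions\<close>

lemma hermite_Suc_eq: "hermite (Suc n) z = 2 * z * hermite n z - 2 * of_nat n * hermite (n - 1) z"
  by (cases n) simp_all

lemma has_field_derivative_hermite: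
  "(hermite n has_field_derivative (2 * of_nat n * hermite (n - 1) z)) (at z)"
proof (induction n arbitrary: z rule: induct_nat_012)
  case 0
  have "hermite 0 = (\<lambda>z. 1)" by (simp add: fun_eq_iff)
  then show ?case by simp
next
  case 1
  have "hermite (Suc 0) = (\<lambda>z. 2 * z)" by (simp add: fun_eq_iff)
  then show ?case by (auto intro!: derivative_eq_intros)
next
  case (ge2 n)
  have "hermite (Suc (Suc n)) = (\<lambda>z. 2 * z * hermite (Suc n) z - 2 * of_nat (Suc n) * hermite n z)"
    by (auto simp: fun_eq_iff)
  moreover have "((\<lambda>z. 2 * z * hermite (Suc n) z - 2 * of_nat (Suc n) * hermite n z)
      has_field_derivative 2 * of_nat (Suc (Suc n)) * hermite (Suc n) z) (at z)"
    by (rule derivative_eq_intros ge2 refl | simp add: hermite_Suc_eq[of n z] algebra_simps)+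
  ultimately show ?case by simp
qed

lemma has_field_derivative_hermite_scaled:
  "D = s * (2 * of_nat n * hermite (n - 1) (s * z)) \<Longrightarrow>
   ((\<lambda>x. hermite n (s * x)) has_field_derivative D) (at z)"
  using DERIV_chain2[OF has_field_derivative_hermite[of n "s * z"] DERIV_cmult_Id[of s z]]
  by (simp add: algebra_simps)

definition hermite_fun :: "complex \<Rightarrow> complex \<Rightarrow> complex \<Rightarrow> nat \<Rightarrow> complex \<Rightarrow> complex" where
  "hermite_fun c a s n z = c * exp (- (a * z\<^sup>2 / 2)) * hermite n (s * z)"

definition hermite_fun_deriv :: "complex \<Rightarrow> complex \<Rightarrow> complex \<Rightarrow> nat \<Rightarrow> complex \<Rightarrow> complex" where
  "hermite_fun_deriv c a s n z = c * exp (- (a * z\<^sup>2 / 2))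
     * (- a * z * hermite n (s * z) + s * 2 * of_nat n * hermite (n - 1) (s * z))"

lemma has_field_derivative_hermite_fun:
  "(hermite_fun c a s n has_field_derivative hermite_fun_deriv c a s n z) (at z)"
  unfolding hermite_fun_def[abs_def] hermite_fun_deriv_def
  by (rule derivative_eq_intros has_field_derivative_hermite_scaled refl
      | simp add: algebra_simps power2_eq_square)+

text \<open>
  With s^2 = a this is the oscillator equation G'' = (a^2 z^2 - a(2n+1)) G; the three-term
  recurrence eliminates H_(n-2).\<close>
lemma hermite_fun_oscillator:
  assumes "s\<^sup>2 = a"
  shows "(hermite_fun_deriv c a s n has_field_derivative
           ((a\<^sup>2 * z\<^sup>2 - a * (2 * of_nat n + 1)) * hermite_fun c a s n z)) (at z)"
proof -
  let ?H0 = "hermite n (s * z)" and ?H1 = "hermite (n - 1) (s * z)"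
    and ?H2 = "hermite (n - 1 - 1) (s * z)"
  have D: "(hermite_fun_deriv c a s n has_field_derivative
     c * exp (- (a * z\<^sup>2 / 2)) * ((- a * z) * (- a * z * ?H0 + s * 2 * of_nat n * ?H1)
      + (- a * ?H0 - a * z * s * 2 * of_nat n * ?H1
         + s * 2 * of_nat n * s * 2 * of_nat (n - 1) * ?H2))) (at z)"
    unfolding hermite_fun_deriv_def[abs_def]
    by (rule derivative_eq_intros has_field_derivative_hermite_scaled refl
        | simp add: algebra_simps power2_eq_square)+
  have recurrence: "of_nat n * (2 * (s * z) * ?H1 - 2 * of_nat (n - 1) * ?H2) = of_nat n * ?H0"
    using hermite_Suc_eq[of "n - 1" "s * z"] by (cases n) simp_all
  have a: "a = s * s" using assms by (simp add: power2_eq_square)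
  have "(- a * z) * (- a * z * ?H0 + s * 2 * of_nat n * ?H1)
      + (- a * ?H0 - a * z * s * 2 * of_nat n * ?H1 + s * 2 * of_nat n * s * 2 * of_nat (n - 1) * ?H2)
      = a\<^sup>2 * z\<^sup>2 * ?H0 - a * ?H0 - 2 * a * (of_nat n * (2 * (s * z) * ?H1 - 2 * of_nat (n - 1) * ?H2))"
    unfolding a by (simp add: algebra_simps power2_eq_square)
  also have "\<dots> = (a\<^sup>2 * z\<^sup>2 - a * (2 * of_nat n + 1)) * ?H0"
    unfolding recurrence by (simp add: algebra_simps)
  finally show ?thesis
    using D by (simp add: hermite_fun_def mult_ac)
qed

section \<open>The functions f_n as solutions of Weber's equation\<close>

lemma norm_hermite_le: "\<exists>C. \<forall>z. norm (hermite n z) \<le> C * (1 + norm z) ^ n"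
proof (induction n rule: induct_nat_012)
  case 0
  then show ?case by (auto intro!: exI[of _ 1])
next
  case 1
  then show ?case by (auto intro!: exI[of _ 2] simp: norm_mult)
next
  case (ge2 n)
  obtain C0 where C0: "\<And>z. norm (hermite n z) \<le> C0 * (1 + norm z) ^ n"
    using ge2 by blast
  obtain C1 where C1: "\<And>z. norm (hermite (Suc n) z) \<le> C1 * (1 + norm z) ^ Suc n"
    using ge2 by blast
  have "norm (hermite (Suc (Suc n)) z) \<le> (2 * \<bar>C1\<bar> + 2 * (real n + 1) * \<bar>C0\<bar>) * (1 + norm z) ^ Suc (Suc n)"
    for z
  proof -
    let ?X = "1 + norm z"
    have X: "1 \<le> ?X" "norm z \<le> ?X" by auto
    have "norm (hermite (Suc (Suc n)) z)
        \<le> norm (2 * z * hermite (Suc n) z) + norm (2 * of_nat (Suc n) * hermite n z)"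
      using norm_triangle_ineq4 by simp
    also have "norm (2 * z * hermite (Suc n) z) \<le> 2 * ?X * (\<bar>C1\<bar> * ?X ^ Suc n)"
      unfolding norm_mult using C1[of z] X
      by (intro mult_mono) (auto intro: order_trans[OF _ mult_right_mono[OF abs_ge_self]])
    also have "norm (2 * of_nat (Suc n) * hermite n z) \<le> 2 * (real n + 1) * (\<bar>C0\<bar> * ?X ^ Suc (Suc n))"
    proof -
      have "C0 * ?X ^ n \<le> \<bar>C0\<bar> * ?X ^ n" by (intro mult_right_mono) auto
      also have "\<dots> \<le> \<bar>C0\<bar> * ?X ^ Suc (Suc n)" using X by (intro mult_left_mono power_increasing) auto
      finally have "norm (hermite n z) \<le> \<bar>C0\<bar> * ?X ^ Suc (Suc n)" using C0[of z] by linarith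
      moreover have "norm (2 * of_nat (Suc n) * hermite n z) = 2 * (real n + 1) * norm (hermite n z)"
        by (simp only: norm_mult norm_numeral norm_of_nat) simp
      ultimately show ?thesis by (auto intro!: mult_left_mono)
    qed
    finally show ?thesis by (simp add: algebra_simps)
  qed
  then show ?case by blast
qed

lemma poly_growth_real_hermite: "poly_growth_real (\<lambda>q. hermite n (s * of_real q))"
proof -
  obtain C where C: "\<And>z. norm (hermite n z) \<le> C * (1 + norm z) ^ n" using norm_hermite_le by blast
  have "norm (hermite n (s * of_real q)) \<le> (\<bar>C\<bar> * (1 + norm s) ^ n) * (1 + \<bar>q\<bar>) ^ n" for q
  proof -
    have "1 + norm (s * of_real q) \<le> (1 + norm s) * (1 + \<bar>q\<bar>)"
      by (simp add: norm_mult algebra_simps)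
    then have "(1 + norm (s * of_real q)) ^ n \<le> ((1 + norm s) * (1 + \<bar>q\<bar>)) ^ n"
      by (intro power_mono) auto
    then have "C * (1 + norm (s * of_real q)) ^ n \<le> \<bar>C\<bar> * ((1 + norm s) * (1 + \<bar>q\<bar>)) ^ n"
      by (meson abs_ge_self abs_ge_zero mult_mono order_trans zero_le_power add_nonneg_nonneg
          zero_le_one norm_ge_zero)
    then show ?thesis using C[of "s * of_real q"] by (simp add: power_mult_distrib mult_ac)
  qed
  moreover have "continuous_on UNIV (\<lambda>q::real. hermite n (s * of_real q))"
    using DERIV_isCont[OF has_field_derivative_hermite]
    by (intro continuous_at_imp_continuous_on ballI continuous_intros
        isCont_o2[where f="\<lambda>q. s * of_real q"]) auto
  ultimately show ?thesis unfolding poly_growth_def by blast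
qed

lemma poly_growth_real_exp_imaginary_gaussian:
  assumes "Re a = 0"
  shows "poly_growth_real (\<lambda>q. exp (- (a * (of_real q)\<^sup>2 / 2)))"
  unfolding poly_growth_def
proof (intro conjI exI allI)
  show "continuous_on UNIV (\<lambda>q. exp (- (a * (of_real q)\<^sup>2 / 2)))"
    by (intro continuous_intros) auto
  fix q :: real
  have "Re (- (a * (of_real q)\<^sup>2 / 2)) = 0" using assms by (simp add: power2_eq_square)
  then have "norm (exp (- (a * (of_real q)\<^sup>2 / 2))) = 1"
    by (simp only: norm_exp_eq_Re exp_zero)
  then show "norm (exp (- (a * (of_real q)\<^sup>2 / 2))) \<le> 1 * (1 + \<bar>q\<bar>) ^ 0"
    by (simp del: norm_exp_eq_Re)
qed

lemma poly_growth_real_of_real: "poly_growth_real (\<lambda>q. of_real q)"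
  unfolding poly_growth_def by (intro conjI exI[of _ 1] exI[of _ "1::nat"] allI continuous_intros) auto

lemma tempered_weber_solution_hermite_fun:
  assumes sa: "s\<^sup>2 = a" and Re: "Re a = 0" and a2: "a\<^sup>2 = - (of_real E)\<^sup>2 / 4"
  shows "tempered_weber_solution E (- a * (2 * of_nat n + 1)) (\<lambda>q. hermite_fun c a s n (of_real q))"
proof -
  let ?g = "\<lambda>q. hermite_fun c a s n (of_real q)"
    and ?g' = "\<lambda>q. hermite_fun_deriv c a s n (of_real q)"
    and ?V = "\<lambda>q. a\<^sup>2 * (of_real q)\<^sup>2 - a * (2 * of_nat n + 1)"
  note growth = poly_growth_mult poly_growth_add poly_growth_diff poly_growth_const
    poly_growth_real_of_real poly_growth_real_exp_imaginary_gaussian[OF Re] poly_growth_real_hermite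
  have "poly_growth_real ?g"
    unfolding hermite_fun_def by (intro growth)
  moreover have "poly_growth_real ?g'"
    unfolding hermite_fun_deriv_def by (intro growth) auto
  moreover have "poly_growth_real ?V"
    unfolding power2_eq_square by (intro growth) auto
  moreover have "(?g has_vector_derivative ?g' q) (at q)" for q
    by (rule has_vector_derivative_real_field[OF has_field_derivative_hermite_fun])
  moreover have "(?g' has_vector_derivative ?V q * ?g q) (at q)" for q
    by (rule has_vector_derivative_real_field[OF hermite_fun_oscillator[OF sa]])
  moreover have "?V q * ?g q = (- a * (2 * of_nat n + 1) - (of_real E)\<^sup>2 / 4 * (of_real q)\<^sup>2) * ?g q"
    for q
    by (simp add: a2 algebra_simps)
  ultimately show ?thesis
    unfolding tempered_weber_solution_def by (blast intro: poly_growth_mult)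
qed

lemma fpm_eq_hermite_fun:
  "fpm E' \<sigma> n = (\<lambda>q. hermite_fun ((of_real \<sigma> * \<i>) powr (1/4) * of_real (normN E' n))
     (of_real \<sigma> * \<i> * of_real E') (csqrt (of_real \<sigma> * \<i> * of_real E')) n (of_real q))"
  unfolding fpm_def hermite_fun_def by (simp add: fun_eq_iff algebra_simps)

lemma tempered_weber_solution_fpm:
  assumes "\<sigma> = 1 \<or> \<sigma> = -1"
  shows "tempered_weber_solution E (- of_real \<sigma> * \<i> * of_real E / 2 * (2 * of_nat n + 1))
           (fpm (E/2) \<sigma> n)"
proof -
  have "(of_real \<sigma> * \<i> * of_real (E/2))\<^sup>2 = - (of_real E)\<^sup>2 / (4::complex)"
    using assms by (auto simp: power2_eq_square field_simps)
  from tempered_weber_solution_hermite_fun[OF power2_csqrt _ this]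
  show ?thesis unfolding fpm_eq_hermite_fun by (simp add: field_simps)
qed

lemma wig_pair_eq_fourier_pairing:
  "wig_pair E \<theta> \<sigma> n m \<phi> = 1 / (2 * of_real pi) * fourier_pairing (wigF E \<theta> \<sigma> n m) \<phi>"
  unfolding wig_pair_def fourier_pairing_def fourier_x_def by simp

theorem lemma4:
  fixes E \<theta> \<sigma> :: real and n m :: nat
  assumes "E > 0" and "\<theta> = 2 / E" and "\<sigma> = 1 \<or> \<sigma> = -1"
  shows "(\<forall>\<phi>. test_fun \<phi> \<longrightarrow>
            wig_pair E \<theta> \<sigma> n m (Dsq_T E \<phi>) = of_real \<sigma> * calE E n * wig_pair E \<theta> \<sigma> n m \<phi>)
       \<and> (\<forall>\<phi>. test_fun \<phi> \<longrightarrow>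
            wig_pair E \<theta> \<sigma> n m (Dtsq_T E \<phi>) = of_real \<sigma> * calE E m * wig_pair E \<theta> \<sigma> n m \<phi>)"
proof -
  have c: "E * (1 / E) = 1" using assms(1) by simp
  note g = tempered_weber_solution_fpm[OF assms(3), of E n]
  have h: "tempered_weber_solution E (- of_real \<sigma> * \<i> * of_real E / 2 * (2 * of_nat m + 1))
      (\<lambda>q. cnj (fpm (E/2) (- \<sigma>) m q))"
    using tempered_weber_solution_cnj[OF tempered_weber_solution_fpm[of "- \<sigma>" E m]] assms(3)
    by auto
  have F: "wigF E \<theta> \<sigma> n m
      = (\<lambda>t k. fpm (E/2) \<sigma> n (t - 1 / E * k) * cnj (fpm (E/2) (- \<sigma>) m (t + 1 / E * k)))"
    using assms(2) by (simp add: wigF_def fun_eq_iff)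
  note eigen = fourier_pairing_weber_product_eigen[OF c g h, folded F]
  show ?thesis
    unfolding wig_pair_eq_fourier_pairing Dsq_T_eq Dtsq_T_eq
    by (simp add: eigen calE_def field_simps)
qed

end
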